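(* Let $H$ be a separable complex Hilbert space with inner product $\langle \cdot,\cdot\rangle$ and norm $\|\cdot\|$. Let $u,v\in H$ be nonzero vectors such that $u$ is not a scalar multiple of $v$. Let $$w=\frac{1}{\|u\|^2}\,u\otimes u+\frac{1}{\|v\|^2}\,v\otimes v\in H\otimes H,\qquad b=\frac{1}{\|w\|}\,w.$$ Then the entanglement entropy of $b$ satisfies $$E(b)\ge 2\,\frac{\left(\|u\|^2\|v\|^2-|\langle u,v\rangle|^2\right)^2}{\left(2\|u\|^2\|v\|^2+\langle u,v\rangle^2+\langle v,u\rangle^2\right)^2}.$$
   Context: $H\otimes H$ denotes the Hilbert space tensor product. For a unit vector $b\in H\otimes H$, let $P_b$ be the rank one orthogonal projection onto $\mathbb{C}b$. The partial trace $\rho=\mathrm{Tr}_2(P_b)$ is the operator on $H$ defined by $\langle x,\rho y\rangle=\sum_i\langle x\otimes e_i, P_b(y\otimes e_i)\rangle$ for all $x,y\in H$, where $\{e_i\}$ is any orthonormal basis of $H$. The entanglement entropy of $b$ is $E(b)=-\mathrm{Tr}(\rho\ln\rho)=-\sum_i\langle(\rho\ln\rho)e_i,e_i\rangle$, where $\rho\ln\rho$ is defined by continuous functional calculus (with $0\ln 0=0$); equivalently, $E(b)=-\sum_j\lambda_j\ln\lambda_j$ where $\lambda_j$ are the eigenvalues of $\rho$. *)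

theory Defs
  imports "HOL-Analysis.Analysis"
begin

text \<open>A separable complex Hilbert space is modelled (up to unitary isomorphism) as
  l2(I) for a countable index type I: square-summable functions I -> complex.
  Its Hilbert tensor square is l2(I x I), with (x tensor y)(i,j) = x i * y j.\<close>

definition is_l2 :: "('a \<Rightarrow> complex) \<Rightarrow> bool" where
  "is_l2 x \<longleftrightarrow> (\<lambda>i. (cmod (x i))\<^sup>2) summable_on UNIV"

definition l2_inner :: "('a \<Rightarrow> complex) \<Rightarrow> ('a \<Rightarrow> complex) \<Rightarrow> complex" where
  "l2_inner x y = (\<Sum>\<^sub>\<infinity>i. cnj (x i) * y i)"

definition l2_norm :: "('a \<Rightarrow> complex) \<Rightarrow> real" where
  "l2_norm x = sqrt (\<Sum>\<^sub>\<infinity>i. (cmod (x i))\<^sup>2)"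

definition tensor :: "('a \<Rightarrow> complex) \<Rightarrow> ('a \<Rightarrow> complex) \<Rightarrow> ('a \<times> 'a \<Rightarrow> complex)" where
  "tensor x y = (\<lambda>(i, j). x i * y j)"

definition basis_vec :: "'a \<Rightarrow> ('a \<Rightarrow> complex)" where
  "basis_vec k = (\<lambda>i. if i = k then 1 else 0)"

definition proj1 :: "('a \<Rightarrow> complex) \<Rightarrow> ('a \<Rightarrow> complex) \<Rightarrow> ('a \<Rightarrow> complex)" where
  "proj1 b z = (\<lambda>i. l2_inner b z * b i)"

text \<open>Partial trace over the second factor: the operator rho on l2(I) determined by
  <x, rho y> = sum_i <x tensor e_i, P (y tensor e_i)>; its k-th coordinate is <e_k, rho y>.\<close>
definition ptrace2 :: "(('a \<times> 'a \<Rightarrow> complex) \<Rightarrow> ('a \<times> 'a \<Rightarrow> complex))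
                      \<Rightarrow> ('a \<Rightarrow> complex) \<Rightarrow> ('a \<Rightarrow> complex)" where
  "ptrace2 P y = (\<lambda>k. \<Sum>\<^sub>\<infinity>i. l2_inner (tensor (basis_vec k) (basis_vec i))
                                       (P (tensor y (basis_vec i))))"

definition eigenspace_l2 :: "(('a \<Rightarrow> complex) \<Rightarrow> ('a \<Rightarrow> complex)) \<Rightarrow> complex \<Rightarrow> ('a \<Rightarrow> complex) set" where
  "eigenspace_l2 A \<mu> = {y. is_l2 y \<and> A y = (\<lambda>i. \<mu> * y i)}"

definition is_eigenvalue_l2 :: "(('a \<Rightarrow> complex) \<Rightarrow> ('a \<Rightarrow> complex)) \<Rightarrow> complex \<Rightarrow> bool" where
  "is_eigenvalue_l2 A \<mu> \<longleftrightarrow> (\<exists>y \<in> eigenspace_l2 A \<mu>. y \<noteq> (\<lambda>_. 0))"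

definition orthonormal_l2 :: "('a \<Rightarrow> complex) set \<Rightarrow> bool" where
  "orthonormal_l2 S \<longleftrightarrow> (\<forall>x\<in>S. \<forall>y\<in>S. l2_inner x y = (if x = y then 1 else 0))"

text \<open>Multiplicity of an eigenvalue = dimension of its eigenspace (finite for the nonzero
  eigenvalues of a trace-class operator).\<close>
definition eig_mult :: "(('a \<Rightarrow> complex) \<Rightarrow> ('a \<Rightarrow> complex)) \<Rightarrow> complex \<Rightarrow> nat" where
  "eig_mult A \<mu> = Sup {card S | S. finite S \<and> S \<subseteq> eigenspace_l2 A \<mu> \<and> orthonormal_l2 S}"

text \<open>Entanglement entropy E(b) = - sum_j lambda_j ln lambda_j over the eigenvalues of
  rho = Tr_2(P_b), counted with multiplicity (zero eigenvalues contribute 0 ln 0 = 0).\<close>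
definition ent_entropy :: "('a \<times> 'a \<Rightarrow> complex) \<Rightarrow> real" where
  "ent_entropy b =
     (let \<rho> = ptrace2 (proj1 b) in
      \<Sum>\<^sub>\<infinity>t\<in>{t::real. t \<noteq> 0 \<and> is_eigenvalue_l2 \<rho> (complex_of_real t)}.
          - (real (eig_mult \<rho> (complex_of_real t)) * (t * ln t)))"

end

(* With p = u/|u|, q = v/|v| and c = <p,q>, the state is b = w/|w| for w = p (x) p + q (x) q,
   and N = |w|^2 = 2 + c^2 + (cnj c)^2.  The reduced density rho = Tr_2 P_b maps into span{p,q};
   in the basis p, q it acts by a 2x2 matrix of trace 1 and determinant
   delta = ((1 - |c|^2)/N)^2, so its nonzero eigenvalues are the roots mu_1, mu_2 of
   t^2 - t + delta, with multiplicity at least one each, and at least two when they coincide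
   (then mu_1 = mu_2 = 1/2 and Re c = 0).  From -t ln t >= t (1 - t) one gets
   E(b) >= mu_1 (1 - mu_1) + mu_2 (1 - mu_2) = 2 mu_1 mu_2 = 2 delta, and multiplying numerator
   and denominator by |u|^4 |v|^4 turns 2 delta into the stated bound. *)

theory Submission
  imports Defs "HOL-Library.Quadratic_Discriminant"
begin

section \<open>Square-summable sequences\<close>

lemma l2_inner_summable:
  assumes "is_l2 x" and "is_l2 y"
  shows "(\<lambda>i. cnj (x i) * y i) summable_on UNIV"
proof -
  have "(\<lambda>i. norm (cnj (x i) * cnj (x i))) summable_on UNIV"
       "(\<lambda>i. norm (y i * y i)) summable_on UNIV"
    using assms by (simp_all add: is_l2_def norm_mult power2_eq_square)
  then show ?thesis
    by (rule abs_summable_summable[OF abs_summable_product])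
qed

lemma is_l2_lincomb:
  assumes "is_l2 x" and "is_l2 y"
  shows "is_l2 (\<lambda>i. a * x i + b * y i)"
proof -
  have bound: "(cmod (a * x i + b * y i))\<^sup>2
      \<le> 2 * (cmod a)\<^sup>2 * (cmod (x i))\<^sup>2 + 2 * (cmod b)\<^sup>2 * (cmod (y i))\<^sup>2" for i
  proof -
    have "cmod (a * x i + b * y i) \<le> cmod a * cmod (x i) + cmod b * cmod (y i)"
      by (metis norm_mult norm_triangle_ineq)
    then have "(cmod (a * x i + b * y i))\<^sup>2 \<le> (cmod a * cmod (x i) + cmod b * cmod (y i))\<^sup>2"
      by (simp add: power_mono)
    also have "\<dots> \<le> 2 * (cmod a)\<^sup>2 * (cmod (x i))\<^sup>2 + 2 * (cmod b)\<^sup>2 * (cmod (y i))\<^sup>2"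
      using zero_le_power2[of "cmod a * cmod (x i) - cmod b * cmod (y i)"]
      unfolding power2_diff power2_sum power_mult_distrib by linarith
    finally show ?thesis .
  qed
  have "(\<lambda>i. 2 * (cmod a)\<^sup>2 * (cmod (x i))\<^sup>2 + 2 * (cmod b)\<^sup>2 * (cmod (y i))\<^sup>2) summable_on UNIV"
    using assms unfolding is_l2_def by (intro summable_on_add summable_on_cmult_right)
  then show ?thesis
    unfolding is_l2_def using bound by (rule summable_on_comparison_test) simp_all
qed

lemma is_l2_scale: "is_l2 x \<Longrightarrow> is_l2 (\<lambda>i. a * x i)"
  using is_l2_lincomb[of x x a 0] by simp

lemma l2_inner_scale_right: "l2_inner x (\<lambda>i. a * y i) = a * l2_inner x y"
  unfolding l2_inner_def by (simp add: mult.left_commute infsum_cmult_right')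

lemma l2_inner_lincomb_right:
  assumes "is_l2 x" and "is_l2 y" and "is_l2 z"
  shows "l2_inner x (\<lambda>i. a * y i + b * z i) = a * l2_inner x y + b * l2_inner x z"
proof -
  have "l2_inner x (\<lambda>i. a * y i + b * z i)
      = (\<Sum>\<^sub>\<infinity>i. a * (cnj (x i) * y i) + b * (cnj (x i) * z i))"
    unfolding l2_inner_def by (simp add: algebra_simps)
  also have "\<dots> = a * l2_inner x y + b * l2_inner x z"
    unfolding l2_inner_def using assms
    by (simp add: infsum_add summable_on_cmult_right l2_inner_summable infsum_cmult_right')
  finally show ?thesis .
qed

lemma l2_inner_commute: "l2_inner y x = cnj (l2_inner x y)"
proof -
  have "cnj (l2_inner x y) = (\<Sum>\<^sub>\<infinity>i. cnj (cnj (x i) * y i))"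
    unfolding l2_inner_def by (rule infsum_cnj[symmetric])
  then show ?thesis
    unfolding l2_inner_def by (simp add: mult.commute)
qed

lemma l2_inner_scale_left: "l2_inner (\<lambda>i. a * x i) y = cnj a * l2_inner x y"
  by (subst (1 2) l2_inner_commute) (simp add: l2_inner_scale_right)

lemma l2_inner_lincomb_left:
  assumes "is_l2 x" and "is_l2 y" and "is_l2 z"
  shows "l2_inner (\<lambda>i. a * y i + b * z i) x = cnj a * l2_inner y x + cnj b * l2_inner z x"
  by (subst (1 2 3) l2_inner_commute) (simp add: l2_inner_lincomb_right[OF assms])

lemma l2_inner_zero_right: "l2_inner x (\<lambda>_. 0) = 0"
  unfolding l2_inner_def by simp

lemma l2_inner_self:
  assumes "is_l2 x"
  shows "l2_inner x x = complex_of_real ((l2_norm x)\<^sup>2)"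
proof -
  have "l2_inner x x = (\<Sum>\<^sub>\<infinity>i. complex_of_real ((cmod (x i))\<^sup>2))"
    unfolding l2_inner_def by (intro infsum_cong) (metis complex_norm_square mult.commute)
  also have "\<dots> = complex_of_real (\<Sum>\<^sub>\<infinity>i. (cmod (x i))\<^sup>2)"
    using assms unfolding is_l2_def by (metis has_sum_infsum has_sum_of_real infsumI)
  finally show ?thesis
    unfolding l2_norm_def by (simp add: infsum_nonneg)
qed

lemma l2_norm_pos:
  assumes "is_l2 x" and "x \<noteq> (\<lambda>_. 0)"
  shows "l2_norm x > 0"
proof -
  obtain i where "x i \<noteq> 0"
    using assms(2) by auto
  then have "0 < (\<Sum>j\<in>{i}. (cmod (x j))\<^sup>2)"
    by simp
  also have "\<dots> \<le> (\<Sum>\<^sub>\<infinity>j. (cmod (x j))\<^sup>2)"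
    using assms(1) unfolding is_l2_def by (intro finite_sum_le_infsum) auto
  finally show ?thesis
    unfolding l2_norm_def by simp
qed

definition l2_normalize :: "('a \<Rightarrow> complex) \<Rightarrow> 'a \<Rightarrow> complex" where
  "l2_normalize x = (\<lambda>i. complex_of_real (1 / l2_norm x) * x i)"

lemma is_l2_normalize: "is_l2 x \<Longrightarrow> is_l2 (l2_normalize x)"
  unfolding l2_normalize_def by (rule is_l2_scale)

lemma l2_inner_normalize_self:
  assumes "is_l2 x" and "x \<noteq> (\<lambda>_. 0)"
  shows "l2_inner (l2_normalize x) (l2_normalize x) = 1"
proof -
  have "l2_inner (l2_normalize x) (l2_normalize x) = complex_of_real ((1 / l2_norm x)\<^sup>2 * (l2_norm x)\<^sup>2)"
    unfolding l2_normalize_def l2_inner_scale_left l2_inner_scale_right l2_inner_self[OF assms(1)]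
    by (simp add: power2_eq_square)
  then show ?thesis
    using l2_norm_pos[OF assms(1,2)] by (simp add: power_divide)
qed

lemma scale_l2_normalize:
  assumes "is_l2 x" and "x \<noteq> (\<lambda>_. 0)"
  shows "x = (\<lambda>i. complex_of_real (l2_norm x) * l2_normalize x i)"
  using l2_norm_pos[OF assms] by (simp add: l2_normalize_def)

lemma l2_inner_unit_cmod_less_1:
  assumes p: "is_l2 p" and q: "is_l2 q" and "l2_inner p p = 1" and "l2_inner q q = 1"
    and not_parallel: "\<forall>a. p \<noteq> (\<lambda>i. a * q i)"
  shows "cmod (l2_inner p q) < 1"
proof -
  define c where "c = l2_inner p q"
  define z where "z = (\<lambda>i. 1 * p i + (- cnj c) * q i)"
  have l2_z: "is_l2 z"
    unfolding z_def using p q by (rule is_l2_lincomb)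
  have q_z: "l2_inner q z = 0"
    unfolding z_def l2_inner_lincomb_right[OF q p q] c_def l2_inner_commute[of q p]
    using assms(4) by simp
  have "l2_inner z z = l2_inner p z - c * l2_inner q z"
    using l2_inner_lincomb_left[OF l2_z p q, of 1 "- cnj c"] unfolding z_def by simp
  also have "\<dots> = 1 - cnj c * c"
    unfolding q_z unfolding z_def l2_inner_lincomb_right[OF p p q] c_def using assms(3) by simp
  finally have "complex_of_real ((l2_norm z)\<^sup>2) = complex_of_real (1 - (cmod c)\<^sup>2)"
    unfolding l2_inner_self[OF l2_z] of_real_diff complex_norm_square by (simp add: mult.commute)
  moreover have "z \<noteq> (\<lambda>_. 0)"
  proof
    assume "z = (\<lambda>_. 0)"
    then have "p = (\<lambda>i. cnj c * q i)"
      unfolding z_def by (simp add: fun_eq_iff eq_neg_iff_add_eq_0[symmetric])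
    with not_parallel show False
      by blast
  qed
  then have "0 < (l2_norm z)\<^sup>2"
    using l2_norm_pos[OF l2_z] by simp
  ultimately have "(cmod c)\<^sup>2 < 1"
    by (simp only: of_real_eq_iff)
  then show ?thesis
    unfolding c_def by (simp add: abs_square_less_1)
qed

section \<open>Tensor products and the partial trace\<close>

lemma
  fixes f g :: "'a \<Rightarrow> 'c::{real_normed_div_algebra, banach, second_countable_topology}"
  assumes f: "(\<lambda>i. norm (f i)) summable_on UNIV" and g: "(\<lambda>j. norm (g j)) summable_on UNIV"
  shows abs_summable_on_times_product: "(\<lambda>(i, j). norm (f i * g j)) summable_on UNIV"
    and infsum_times_product: "(\<Sum>\<^sub>\<infinity>(i, j). f i * g j) = (\<Sum>\<^sub>\<infinity>i. f i) * (\<Sum>\<^sub>\<infinity>j. g j)"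
proof -
  have "(\<lambda>x. norm ((\<lambda>(i, j). f i * g j) x)) summable_on UNIV \<times> UNIV"
  proof (rule iffD2[OF Infinite_Sum.abs_summable_on_Sigma_iff[where A = UNIV and B = "\<lambda>_. UNIV"]],
      intro conjI ballI)
    show "(\<lambda>j. norm ((\<lambda>(i, j). f i * g j) (i, j))) summable_on UNIV" for i
      using g by (simp add: norm_mult summable_on_cmult_right)
    show "(\<lambda>i. norm (\<Sum>\<^sub>\<infinity>j. norm ((\<lambda>(i, j). f i * g j) (i, j)))) summable_on UNIV"
      using f by (simp add: norm_mult infsum_cmult_right' abs_mult infsum_nonneg summable_on_cmult_left)
  qed
  then show abs: "(\<lambda>(i, j). norm (f i * g j)) summable_on UNIV"
    by (simp add: case_prod_beta')
  have "(\<lambda>(i, j). f i * g j) summable_on UNIV \<times> UNIV"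
    using abs_summable_summable[of "\<lambda>(i, j). f i * g j"] abs by (simp add: case_prod_beta')
  then have "(\<Sum>\<^sub>\<infinity>(i, j). f i * g j) = (\<Sum>\<^sub>\<infinity>i. \<Sum>\<^sub>\<infinity>j. f i * g j)"
    using infsum_Sigma_banach[of "\<lambda>(i, j). f i * g j" UNIV "\<lambda>_. UNIV"] by simp
  also have "\<dots> = (\<Sum>\<^sub>\<infinity>i. f i) * (\<Sum>\<^sub>\<infinity>j. g j)"
    by (simp add: infsum_cmult_right' infsum_cmult_left')
  finally show "(\<Sum>\<^sub>\<infinity>(i, j). f i * g j) = (\<Sum>\<^sub>\<infinity>i. f i) * (\<Sum>\<^sub>\<infinity>j. g j)" .
qed

lemma is_l2_tensor:
  assumes "is_l2 x" and "is_l2 y"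
  shows "is_l2 (tensor x y)"
proof -
  have "(\<lambda>(i, j). norm ((cmod (x i))\<^sup>2 * (cmod (y j))\<^sup>2)) summable_on UNIV"
    using assms unfolding is_l2_def by (intro abs_summable_on_times_product) simp_all
  then show ?thesis
    unfolding is_l2_def tensor_def
    by (simp add: case_prod_beta' norm_mult power_mult_distrib)
qed

lemma l2_inner_tensor:
  assumes "is_l2 x" and "is_l2 y" and "is_l2 z" and "is_l2 t"
  shows "l2_inner (tensor x y) (tensor z t) = l2_inner x z * l2_inner y t"
proof -
  have "l2_inner (tensor x y) (tensor z t) = (\<Sum>\<^sub>\<infinity>(i, j). (cnj (x i) * z i) * (cnj (y j) * t j))"
    unfolding l2_inner_def tensor_def by (rule infsum_cong) (auto simp: algebra_simps)
  also have "\<dots> = l2_inner x z * l2_inner y t"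
    unfolding l2_inner_def using assms
    by (intro infsum_times_product)
      (simp_all add: l2_inner_summable flip: summable_on_iff_abs_summable_on_complex)
  finally show ?thesis .
qed

lemma tensor_l2_normalize:
  assumes "is_l2 u" and "u \<noteq> (\<lambda>_. 0)"
  shows "tensor (l2_normalize u) (l2_normalize u)
    = (\<lambda>x. complex_of_real (1 / (l2_norm u)\<^sup>2) * tensor u u x)"
  using l2_norm_pos[OF assms] by (auto simp: fun_eq_iff tensor_def l2_normalize_def power2_eq_square)

lemma l2_inner_basis_tensor: "l2_inner (tensor (basis_vec k) (basis_vec i)) F = F (k, i)"
proof -
  have "l2_inner (tensor (basis_vec k) (basis_vec i)) F
      = (\<Sum>\<^sub>\<infinity>x\<in>{(k, i)}. cnj (tensor (basis_vec k) (basis_vec i) x) * F x)"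
    unfolding l2_inner_def
    by (rule infsum_cong_neutral) (auto simp: tensor_def basis_vec_def split: if_splits)
  then show ?thesis
    by (simp add: tensor_def basis_vec_def)
qed

lemma l2_inner_tensor_basis:
  "l2_inner B (tensor y (basis_vec i)) = (\<Sum>\<^sub>\<infinity>j. cnj (B (j, i)) * y j)"
proof -
  let ?g = "\<lambda>x. cnj (B x) * tensor y (basis_vec i) x"
  have "l2_inner B (tensor y (basis_vec i)) = infsum ?g (range (\<lambda>j. (j, i)))"
    unfolding l2_inner_def
    by (rule infsum_cong_neutral) (auto simp: tensor_def basis_vec_def split: if_splits)
  also have "\<dots> = infsum (?g \<circ> (\<lambda>j. (j, i))) UNIV"
    by (rule infsum_reindex) (auto simp: inj_on_def)
  finally show ?thesis
    by (simp add: tensor_def basis_vec_def o_def)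
qed

lemma ptrace2_proj1:
  "ptrace2 (proj1 B) y k = (\<Sum>\<^sub>\<infinity>i. (\<Sum>\<^sub>\<infinity>j. cnj (B (j, i)) * y j) * B (k, i))"
  unfolding ptrace2_def proj1_def l2_inner_basis_tensor l2_inner_tensor_basis ..

section \<open>Small linear systems and an entropy estimate\<close>

lemma nonzero_kernel_2x2_iff:
  fixes m11 m12 m21 m22 :: "'a::field"
  shows "(\<exists>a b. (a \<noteq> 0 \<or> b \<noteq> 0) \<and> m11 * a + m12 * b = 0 \<and> m21 * a + m22 * b = 0)
         \<longleftrightarrow> m11 * m22 - m12 * m21 = 0"
proof
  assume "\<exists>a b. (a \<noteq> 0 \<or> b \<noteq> 0) \<and> m11 * a + m12 * b = 0 \<and> m21 * a + m22 * b = 0"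
  then obtain a b where ab: "a \<noteq> 0 \<or> b \<noteq> 0" "m11 * a + m12 * b = 0" "m21 * a + m22 * b = 0"
    by blast
  have "(m11 * m22 - m12 * m21) * a = m22 * (m11 * a + m12 * b) - m12 * (m21 * a + m22 * b)"
       "(m11 * m22 - m12 * m21) * b = m11 * (m21 * a + m22 * b) - m21 * (m11 * a + m12 * b)"
    by (simp_all add: algebra_simps)
  then show "m11 * m22 - m12 * m21 = 0"
    using ab by auto
next
  assume det: "m11 * m22 - m12 * m21 = 0"
  consider "m12 \<noteq> 0 \<or> m11 \<noteq> 0" | "m21 \<noteq> 0 \<or> m22 \<noteq> 0" | "m11 = 0 \<and> m12 = 0 \<and> m21 = 0 \<and> m22 = 0"
    by blast
  then show "\<exists>a b. (a \<noteq> 0 \<or> b \<noteq> 0) \<and> m11 * a + m12 * b = 0 \<and> m21 * a + m22 * b = 0"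
  proof cases
    case 1
    then show ?thesis
      using det by (intro exI[of _ m12] exI[of _ "- m11"]) (auto simp: algebra_simps)
  next
    case 2
    then show ?thesis
      using det by (intro exI[of _ m22] exI[of _ "- m21"]) (auto simp: algebra_simps)
  next
    case 3
    then show ?thesis
      by (intro exI[of _ 1] exI[of _ 0]) simp
  qed
qed

lemma nonzero_kernel_2x3:
  fixes s1 s2 s3 t1 t2 t3 :: "'a::field"
  obtains a1 a2 a3 where "a1 \<noteq> 0 \<or> a2 \<noteq> 0 \<or> a3 \<noteq> 0"
    and "a1 * s1 + a2 * s2 + a3 * s3 = 0" and "a1 * t1 + a2 * t2 + a3 * t3 = 0"
proof (cases "s1 * t2 - s2 * t1 = 0")
  case True
  then obtain a b where "a \<noteq> 0 \<or> b \<noteq> 0" "s1 * a + s2 * b = 0" "t1 * a + t2 * b = 0"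
    using nonzero_kernel_2x2_iff[of s1 s2 t1 t2] by blast
  then show ?thesis
    by (intro that[of a b 0]) (simp_all add: mult.commute)
next
  case False
  show ?thesis
    by (rule that[of "s2 * t3 - s3 * t2" "s3 * t1 - s1 * t3" "s1 * t2 - s2 * t1"])
      (use False in \<open>simp_all add: algebra_simps\<close>)
qed

lemma card_orthonormal_l2_span2:
  assumes p: "is_l2 p" and q: "is_l2 q" and "finite S" and orth: "orthonormal_l2 S"
    and span: "\<And>z. z \<in> S \<Longrightarrow> \<exists>a b. z = (\<lambda>i. a * p i + b * q i)"
  shows "card S \<le> 2"
proof (rule ccontr)
  assume "\<not> card S \<le> 2"
  then obtain T where "T \<subseteq> S" "card T = 3"
    by (metis obtain_subset_with_card_n not_less_eq_eq numeral_2_eq_2 numeral_3_eq_3)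
  then obtain z1 z2 z3 where z: "z1 \<in> S" "z2 \<in> S" "z3 \<in> S" "z1 \<noteq> z2" "z2 \<noteq> z3" "z1 \<noteq> z3"
    unfolding card_3_iff by auto
  obtain s1 t1 s2 t2 s3 t3 where
    zs: "z1 = (\<lambda>i. s1 * p i + t1 * q i)" "z2 = (\<lambda>i. s2 * p i + t2 * q i)"
        "z3 = (\<lambda>i. s3 * p i + t3 * q i)"
    using span z(1-3) by metis
  obtain a1 a2 a3 where a: "a1 \<noteq> 0 \<or> a2 \<noteq> 0 \<or> a3 \<noteq> 0"
    and "a1 * s1 + a2 * s2 + a3 * s3 = 0" "a1 * t1 + a2 * t2 + a3 * t3 = 0"
    by (rule nonzero_kernel_2x3)
  moreover have "a1 * z1 i + a2 * z2 i + a3 * z3 i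
      = (a1 * s1 + a2 * s2 + a3 * s3) * p i + (a1 * t1 + a2 * t2 + a3 * t3) * q i" for i
    unfolding zs by (simp add: algebra_simps)
  ultimately have "(\<lambda>i. a1 * z1 i + a2 * z2 i + a3 * z3 i) = (\<lambda>_. 0)"
    by simp
  moreover have l2: "is_l2 z1" "is_l2 z2" "is_l2 z3" "is_l2 (\<lambda>i. a1 * z1 i + a2 * z2 i)"
    unfolding zs using p q by (auto intro!: is_l2_lincomb)
  ultimately have "a1 * l2_inner z z1 + a2 * l2_inner z z2 + a3 * l2_inner z z3 = 0" if "is_l2 z" for z
    using l2_inner_lincomb_right[OF that l2(4) l2(3), of 1 a3]
      l2_inner_lincomb_right[OF that l2(1,2), of a1 a2]
    by (simp add: l2_inner_zero_right)
  moreover have "l2_inner x y = (if x = y then 1 else 0)" if "x \<in> S" "y \<in> S" for x y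
    using orth that unfolding orthonormal_l2_def by blast
  ultimately have "a1 = 0" "a2 = 0" "a3 = 0"
    using l2(1-3) z by (metis mult_1_right mult_zero_right add_0 add_0_right)+
  then show False
    using a by simp
qed

lemma mult_one_minus_le_neg_mult_ln:
  fixes t :: real
  assumes "0 < t"
  shows "t * (1 - t) \<le> - (t * ln t)"
  using mult_left_mono[OF ln_le_minus_one[OF assms], of t] assms by (simp add: algebra_simps)

lemma infsum_two_point_entropy_ge:
  fixes t1 t2 :: real and m :: "real \<Rightarrow> nat"
  assumes "0 < t1" and "0 < t2" and "t1 + t2 = 1"
    and "1 \<le> m t1" and "1 \<le> m t2" and "t1 = t2 \<Longrightarrow> 2 \<le> m t1"
  shows "2 * t1 * t2 \<le> (\<Sum>\<^sub>\<infinity>t\<in>{t1, t2}. - (real (m t) * (t * ln t)))"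
proof -
  have entropy_ge: "k * (t * (1 - t)) \<le> - (real (m t) * (t * ln t))"
    if "0 < t" "t \<le> 1" "k \<le> real (m t)" for t k
  proof -
    have "k * (t * (1 - t)) \<le> real (m t) * (t * (1 - t))"
      using that by (intro mult_right_mono) auto
    also have "\<dots> \<le> real (m t) * - (t * ln t)"
      using that(1) by (intro mult_left_mono mult_one_minus_le_neg_mult_ln) auto
    finally show ?thesis
      by simp
  qed
  have "1 - t1 = t2" and "1 - t2 = t1" and "t1 \<le> 1" and "t2 \<le> 1"
    using assms(1-3) by linarith+
  show ?thesis
  proof (cases "t1 = t2")
    case True
    then show ?thesis
      using assms(1,6) \<open>t1 \<le> 1\<close> entropy_ge[of t1 2, unfolded \<open>1 - t1 = t2\<close>] by simp
  next
    case False
    have "2 * t1 * t2 = 1 * (t1 * (1 - t1)) + 1 * (t2 * (1 - t2))"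
      unfolding \<open>1 - t1 = t2\<close> \<open>1 - t2 = t1\<close> by simp
    also have "\<dots> \<le> - (real (m t1) * (t1 * ln t1)) + - (real (m t2) * (t2 * ln t2))"
      using assms \<open>t1 \<le> 1\<close> \<open>t2 \<le> 1\<close> by (intro add_mono entropy_ge) auto
    also have "\<dots> = (\<Sum>\<^sub>\<infinity>t\<in>{t1, t2}. - (real (m t) * (t * ln t)))"
      using False by simp
    finally show ?thesis .
  qed
qed

section \<open>The reduced density of a sum of two product states\<close>

locale unit_pair =
  fixes p q :: "'a \<Rightarrow> complex"
  assumes l2_p: "is_l2 p" and l2_q: "is_l2 q"
    and unit_p: "l2_inner p p = 1" and unit_q: "l2_inner q q = 1"
    and overlap_less_1: "cmod (l2_inner p q) < 1"

lemma unit_pair_l2_normalize: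
  assumes "is_l2 u" and "is_l2 v" and "u \<noteq> (\<lambda>_. 0)" and "v \<noteq> (\<lambda>_. 0)"
    and not_parallel: "\<forall>a. u \<noteq> (\<lambda>i. a * v i)"
  shows "unit_pair (l2_normalize u) (l2_normalize v)"
proof
  show l2: "is_l2 (l2_normalize u)" "is_l2 (l2_normalize v)"
    using assms(1,2) by (simp_all add: is_l2_normalize)
  show unit: "l2_inner (l2_normalize u) (l2_normalize u) = 1"
    "l2_inner (l2_normalize v) (l2_normalize v) = 1"
    using assms(1-4) by (simp_all add: l2_inner_normalize_self)
  have "\<forall>a. l2_normalize u \<noteq> (\<lambda>i. a * l2_normalize v i)"
  proof (intro allI notI)
    fix a
    assume "l2_normalize u = (\<lambda>i. a * l2_normalize v i)"
    then have "u = (\<lambda>i. (complex_of_real (l2_norm u) * a / complex_of_real (l2_norm v)) * v i)"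
      using l2_norm_pos[OF assms(2,4)]
      by (subst scale_l2_normalize[OF assms(1,3)], subst (2) scale_l2_normalize[OF assms(2,4)]) auto
    with not_parallel show False
      by blast
  qed
  then show "cmod (l2_inner (l2_normalize u) (l2_normalize v)) < 1"
    using l2 unit by (intro l2_inner_unit_cmod_less_1)
qed

context unit_pair
begin

abbreviation c :: complex where "c \<equiv> l2_inner p q"

definition w :: "'a \<times> 'a \<Rightarrow> complex" where
  "w = (\<lambda>x. tensor p p x + tensor q q x)"

definition b :: "'a \<times> 'a \<Rightarrow> complex" where
  "b = l2_normalize w"

definition N :: real where
  "N = (l2_norm w)\<^sup>2"

abbreviation \<rho> :: "('a \<Rightarrow> complex) \<Rightarrow> 'a \<Rightarrow> complex" where
  "\<rho> \<equiv> ptrace2 (proj1 b)"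

lemma inner_q_p: "l2_inner q p = cnj c"
  by (rule l2_inner_commute)

lemma inner_lincomb_pq:
  "l2_inner p (\<lambda>k. a * p k + a' * q k) = a + a' * c"
  "l2_inner q (\<lambda>k. a * p k + a' * q k) = a * cnj c + a'"
  by (simp_all add: l2_inner_lincomb_right l2_p l2_q unit_p unit_q inner_q_p)

lemma cmod_overlap_sq: "c * cnj c = complex_of_real ((cmod c)\<^sup>2)"
  by (rule complex_norm_square[symmetric])

lemma N_eq: "complex_of_real N = 2 + c\<^sup>2 + (cnj c)\<^sup>2"
proof -
  have l2_tensors: "is_l2 (tensor p p)" "is_l2 (tensor q q)"
    using l2_p l2_q by (simp_all add: is_l2_tensor)
  have w_lincomb: "w = (\<lambda>x. 1 * tensor p p x + 1 * tensor q q x)"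
    unfolding w_def by simp
  have l2_w: "is_l2 w"
    unfolding w_lincomb using l2_tensors by (rule is_l2_lincomb)
  have "l2_inner w w = l2_inner (tensor p p) w + l2_inner (tensor q q) w"
    using l2_inner_lincomb_left[OF l2_w l2_tensors, of 1 1] w_lincomb by simp
  also have "\<dots> = (l2_inner (tensor p p) (tensor p p) + l2_inner (tensor p p) (tensor q q))
      + (l2_inner (tensor q q) (tensor p p) + l2_inner (tensor q q) (tensor q q))"
    using l2_inner_lincomb_right[OF l2_tensors(1) l2_tensors, of 1 1]
      l2_inner_lincomb_right[OF l2_tensors(2) l2_tensors, of 1 1]
    unfolding w_def by simp
  also have "\<dots> = 2 + c\<^sup>2 + (cnj c)\<^sup>2"
    by (simp add: l2_inner_tensor l2_p l2_q unit_p unit_q inner_q_p power2_eq_square)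
  finally show ?thesis
    unfolding N_def using l2_inner_self[OF l2_w] by simp
qed

lemma N_re: "N = 2 + 2 * (Re c)\<^sup>2 - 2 * (Im c)\<^sup>2"
  using arg_cong[OF N_eq, of Re] by (simp add: power2_eq_square)

lemma cmod_overlap_sq_less_1: "(cmod c)\<^sup>2 < 1"
  using overlap_less_1 by (simp add: abs_square_less_1)

lemma Im_overlap_sq_less_1: "(Im c)\<^sup>2 < 1"
  using cmod_overlap_sq_less_1 zero_le_power2[of "Re c"] unfolding cmod_power2 by linarith

lemma N_pos: "0 < N"
  using N_re Im_overlap_sq_less_1 zero_le_power2[of "Re c"] by linarith

lemma rho_apply:
  assumes y: "is_l2 y"
  shows "\<rho> y = (\<lambda>k. ((l2_inner p y + cnj c * l2_inner q y) * p k
                      + (c * l2_inner p y + l2_inner q y) * q k) / complex_of_real N)"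
proof
  fix k
  define r where "r = complex_of_real (1 / l2_norm w)"
  define \<alpha> where "\<alpha> = l2_inner p y"
  define \<beta> where "\<beta> = l2_inner q y"
  define z where "z = (\<lambda>i. p k * p i + q k * q i)"
  have l2_z: "is_l2 z"
    unfolding z_def using l2_p l2_q by (rule is_l2_lincomb)
  have b_entry: "b (j, i) = r * (p j * p i + q j * q i)" for i j
    by (simp add: b_def l2_normalize_def w_def tensor_def r_def)
  have r_sq: "r * r = 1 / complex_of_real N"
    by (simp add: r_def N_def power2_eq_square)
  have inner: "(\<Sum>\<^sub>\<infinity>j. cnj (b (j, i)) * y j) = r * (\<alpha> * cnj (p i) + \<beta> * cnj (q i))" for i
  proof -
    have "(\<Sum>\<^sub>\<infinity>j. cnj (b (j, i)) * y j)
        = (\<Sum>\<^sub>\<infinity>j. (r * cnj (p i)) * (cnj (p j) * y j) + (r * cnj (q i)) * (cnj (q j) * y j))"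
      by (rule infsum_cong) (simp add: b_entry r_def algebra_simps)
    also have "\<dots> = (r * cnj (p i)) * \<alpha> + (r * cnj (q i)) * \<beta>"
      unfolding \<alpha>_def \<beta>_def l2_inner_def using l2_inner_summable[OF l2_p y] l2_inner_summable[OF l2_q y]
      by (simp add: infsum_add summable_on_cmult_right infsum_cmult_right')
    finally show ?thesis
      by (simp add: algebra_simps)
  qed
  have "\<rho> y k = (\<Sum>\<^sub>\<infinity>i. (r * r) * (\<alpha> * (cnj (p i) * z i) + \<beta> * (cnj (q i) * z i)))"
    unfolding ptrace2_proj1 inner by (rule infsum_cong) (simp add: b_entry z_def algebra_simps)
  also have "\<dots> = (r * r) * (\<alpha> * l2_inner p z + \<beta> * l2_inner q z)"
    unfolding l2_inner_def using l2_inner_summable[OF l2_p l2_z] l2_inner_summable[OF l2_q l2_z]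
    by (simp add: infsum_add summable_on_cmult_right infsum_cmult_right')
  also have "\<dots> = ((\<alpha> + cnj c * \<beta>) * p k + (c * \<alpha> + \<beta>) * q k) / complex_of_real N"
    unfolding r_sq z_def inner_lincomb_pq by (simp add: algebra_simps add_divide_distrib)
  finally show "\<rho> y k = ((l2_inner p y + cnj c * l2_inner q y) * p k
      + (c * l2_inner p y + l2_inner q y) * q k) / complex_of_real N"
    unfolding \<alpha>_def \<beta>_def .
qed

lemma rho_scale:
  assumes "is_l2 y"
  shows "\<rho> (\<lambda>i. a * y i) = (\<lambda>i. a * \<rho> y i)"
  unfolding rho_apply[OF assms] rho_apply[OF is_l2_scale[OF assms]] l2_inner_scale_right
  by (simp add: algebra_simps)

lemma rho_lincomb:
  "\<rho> (\<lambda>k. a * p k + a' * q k)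
     = (\<lambda>k. (((1 + (cnj c)\<^sup>2) * a + (c + cnj c) * a') / complex_of_real N) * p k
           + (((c + cnj c) * a + (1 + c\<^sup>2) * a') / complex_of_real N) * q k)"
proof -
  let ?y = "\<lambda>k. a * p k + a' * q k"
  have "l2_inner p ?y + cnj c * l2_inner q ?y = (1 + (cnj c)\<^sup>2) * a + (c + cnj c) * a'"
    and "c * l2_inner p ?y + l2_inner q ?y = (c + cnj c) * a + (1 + c\<^sup>2) * a'"
    unfolding inner_lincomb_pq by (simp_all add: algebra_simps power2_eq_square)
  then show ?thesis
    using l2_p l2_q by (simp add: rho_apply is_l2_lincomb add_divide_distrib distrib_right)
qed

lemma lincomb_pq_eq_iff:
  "(\<lambda>k. a * p k + a' * q k) = (\<lambda>k. d * p k + d' * q k) \<longleftrightarrow> a = d \<and> a' = d'"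
proof
  assume eq: "(\<lambda>k. a * p k + a' * q k) = (\<lambda>k. d * p k + d' * q k)"
  have "1 * (a - d) + c * (a' - d') = 0" and "cnj c * (a - d) + 1 * (a' - d') = 0"
    using arg_cong[OF eq, of "l2_inner p"] arg_cong[OF eq, of "l2_inner q"]
    by (simp_all add: inner_lincomb_pq algebra_simps)
  moreover have "1 * 1 - c * cnj c \<noteq> 0"
    using cmod_overlap_sq_less_1 of_real_eq_1_iff[of "(cmod c)\<^sup>2"]
    unfolding cmod_overlap_sq by auto
  ultimately have "a - d = 0 \<and> a' - d' = 0"
    using nonzero_kernel_2x2_iff[of 1 c "cnj c" 1] by blast
  then show "a = d \<and> a' = d'"
    by simp
qed simp

lemma N_nonzero: "complex_of_real N \<noteq> 0"
  using N_pos by simp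

lemma eigenvector_in_span:
  assumes "\<mu> \<noteq> 0" and y: "is_l2 y" and eig: "\<rho> y = (\<lambda>i. \<mu> * y i)"
  shows "\<exists>a a'. y = (\<lambda>k. a * p k + a' * q k)"
proof -
  let ?X = "l2_inner p y + cnj c * l2_inner q y" and ?Y = "c * l2_inner p y + l2_inner q y"
  let ?D = "complex_of_real N * \<mu>"
  have "y k = (?X / ?D) * p k + (?Y / ?D) * q k" for k
  proof -
    have "\<mu> * y k = (?X * p k + ?Y * q k) / complex_of_real N"
      using fun_cong[OF eig, of k] rho_apply[OF y] by simp
    have "y k = (\<mu> * y k) / \<mu>"
      using assms(1) by simp
    also have "\<dots> = (?X * p k + ?Y * q k) / complex_of_real N / \<mu>"
      by (simp only: \<open>\<mu> * y k = _\<close>)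
    finally show ?thesis
      by (simp add: add_divide_distrib distrib_right)
  qed
  then show ?thesis
    by blast
qed

lemma rho_lincomb_eigen_iff:
  "\<rho> (\<lambda>k. a * p k + a' * q k) = (\<lambda>k. \<mu> * (a * p k + a' * q k))
   \<longleftrightarrow> (1 + (cnj c)\<^sup>2 - complex_of_real N * \<mu>) * a + (c + cnj c) * a' = 0
     \<and> (c + cnj c) * a + (1 + c\<^sup>2 - complex_of_real N * \<mu>) * a' = 0"
proof -
  let ?X = "(1 + (cnj c)\<^sup>2) * a + (c + cnj c) * a'" and ?Y = "(c + cnj c) * a + (1 + c\<^sup>2) * a'"
  have scaled: "(\<lambda>k. \<mu> * (a * p k + a' * q k)) = (\<lambda>k. (\<mu> * a) * p k + (\<mu> * a') * q k)"
    by (simp add: algebra_simps)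
  have "\<rho> (\<lambda>k. a * p k + a' * q k) = (\<lambda>k. \<mu> * (a * p k + a' * q k))
      \<longleftrightarrow> ?X / complex_of_real N = \<mu> * a \<and> ?Y / complex_of_real N = \<mu> * a'"
    unfolding rho_lincomb scaled lincomb_pq_eq_iff ..
  also have "\<dots> \<longleftrightarrow> ?X - complex_of_real N * \<mu> * a = 0 \<and> ?Y - complex_of_real N * \<mu> * a' = 0"
    using N_nonzero by (auto simp: field_simps)
  finally show ?thesis
    by (simp add: algebra_simps)
qed

(* N^2 det (M - t I) for the coefficient matrix M of rho_lincomb. *)
lemma char_poly_eq:
  "(1 + (cnj c)\<^sup>2 - complex_of_real N * complex_of_real t) * (1 + c\<^sup>2 - complex_of_real N * complex_of_real t)
     - (c + cnj c) * (c + cnj c)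
   = complex_of_real (N\<^sup>2 * t\<^sup>2 - N\<^sup>2 * t + (1 - (cmod c)\<^sup>2)\<^sup>2)"
proof -
  define K where "K = complex_of_real N * complex_of_real t"
  have "(1 + (cnj c)\<^sup>2 - K) * (1 + c\<^sup>2 - K) - (c + cnj c) * (c + cnj c)
      = K\<^sup>2 - K * (2 + c\<^sup>2 + (cnj c)\<^sup>2) + (1 - c * cnj c)\<^sup>2"
    by (simp add: algebra_simps power2_eq_square)
  also have "\<dots> = K\<^sup>2 - K * complex_of_real N + (1 - complex_of_real ((cmod c)\<^sup>2))\<^sup>2"
    unfolding N_eq cmod_overlap_sq ..
  finally show ?thesis
    unfolding K_def by (simp add: power2_eq_square algebra_simps)
qed

lemma eigenvalue_rho_iff_kernel:
  assumes "\<mu> \<noteq> 0"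
  shows "is_eigenvalue_l2 \<rho> \<mu> \<longleftrightarrow>
    (\<exists>a a'. (a \<noteq> 0 \<or> a' \<noteq> 0)
      \<and> (1 + (cnj c)\<^sup>2 - complex_of_real N * \<mu>) * a + (c + cnj c) * a' = 0
      \<and> (c + cnj c) * a + (1 + c\<^sup>2 - complex_of_real N * \<mu>) * a' = 0)"
    (is "_ \<longleftrightarrow> (\<exists>a a'. ?kernel a a')")
proof
  assume "is_eigenvalue_l2 \<rho> \<mu>"
  then obtain y where y: "is_l2 y" "\<rho> y = (\<lambda>i. \<mu> * y i)" "y \<noteq> (\<lambda>_. 0)"
    unfolding is_eigenvalue_l2_def eigenspace_l2_def by blast
  then obtain a a' where y_eq: "y = (\<lambda>k. a * p k + a' * q k)"
    using eigenvector_in_span[OF assms y(1,2)] by blast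
  have "\<rho> (\<lambda>k. a * p k + a' * q k) = (\<lambda>k. \<mu> * (a * p k + a' * q k))"
    using y(2) unfolding y_eq .
  then have "?kernel a a'"
    using y(3) unfolding y_eq rho_lincomb_eigen_iff by auto
  then show "\<exists>a a'. ?kernel a a'"
    by blast
next
  assume "\<exists>a a'. ?kernel a a'"
  then obtain a a' where kernel: "?kernel a a'"
    by blast
  then have "\<rho> (\<lambda>k. a * p k + a' * q k) = (\<lambda>k. \<mu> * (a * p k + a' * q k))"
    unfolding rho_lincomb_eigen_iff by blast
  moreover have "(\<lambda>k. a * p k + a' * q k) \<noteq> (\<lambda>_. 0)"
    using lincomb_pq_eq_iff[of a a' 0 0] kernel by auto
  ultimately show "is_eigenvalue_l2 \<rho> \<mu>"
    unfolding is_eigenvalue_l2_def eigenspace_l2_def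
    using is_l2_lincomb[OF l2_p l2_q] by blast
qed

lemma eigenvalue_rho_iff:
  assumes "t \<noteq> 0"
  shows "is_eigenvalue_l2 \<rho> (complex_of_real t) \<longleftrightarrow> N\<^sup>2 * t\<^sup>2 - N\<^sup>2 * t + (1 - (cmod c)\<^sup>2)\<^sup>2 = 0"
proof -
  have t: "complex_of_real t \<noteq> 0"
    using assms by simp
  show ?thesis
    unfolding eigenvalue_rho_iff_kernel[OF t] nonzero_kernel_2x2_iff char_poly_eq
    by (rule of_real_eq_0_iff)
qed

definition \<delta> :: real where
  "\<delta> = ((1 - (cmod c)\<^sup>2) / N)\<^sup>2"

definition \<mu>\<^sub>1 :: real where
  "\<mu>\<^sub>1 = (1 + sqrt (discrim 1 (-1) \<delta>)) / 2"

definition \<mu>\<^sub>2 :: real where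
  "\<mu>\<^sub>2 = (1 - sqrt (discrim 1 (-1) \<delta>)) / 2"

lemma delta_pos: "0 < \<delta>"
  unfolding \<delta>_def using cmod_overlap_sq_less_1 N_pos by simp

lemma discrim_eq: "discrim 1 (-1) \<delta> = (4 * Re c / N)\<^sup>2 * (1 - (Im c)\<^sup>2)"
proof -
  have "N\<^sup>2 - 4 * (1 - (cmod c)\<^sup>2)\<^sup>2 = 16 * (Re c)\<^sup>2 * (1 - (Im c)\<^sup>2)"
    unfolding N_re cmod_power2 by (simp add: power2_eq_square algebra_simps)
  then show ?thesis
    unfolding discrim_def \<delta>_def using N_pos by (simp add: field_simps power2_eq_square)
qed

lemma discrim_nonneg: "0 \<le> discrim 1 (-1) \<delta>"
  unfolding discrim_eq using Im_overlap_sq_less_1 by simp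

lemma sqrt_discrim_less_1: "sqrt (discrim 1 (-1) \<delta>) < 1"
  using delta_pos by (simp add: discrim_def)

lemma mu_sum: "\<mu>\<^sub>1 + \<mu>\<^sub>2 = 1"
  unfolding \<mu>\<^sub>1_def \<mu>\<^sub>2_def by (simp add: field_simps)

lemma mu_prod: "\<mu>\<^sub>1 * \<mu>\<^sub>2 = \<delta>"
proof -
  have "\<mu>\<^sub>1 * \<mu>\<^sub>2 = (1 - (sqrt (discrim 1 (-1) \<delta>))\<^sup>2) / 4"
    unfolding \<mu>\<^sub>1_def \<mu>\<^sub>2_def by (simp add: power2_eq_square algebra_simps)
  then show ?thesis
    using discrim_nonneg by (simp add: discrim_def)
qed

lemma mu_pos: "0 < \<mu>\<^sub>1" "0 < \<mu>\<^sub>2"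
  using add_pos_nonneg[OF zero_less_one real_sqrt_ge_zero[OF discrim_nonneg]] sqrt_discrim_less_1
  by (simp_all add: \<mu>\<^sub>1_def \<mu>\<^sub>2_def)

lemma eigenvalue_rho_iff_mu:
  assumes "t \<noteq> 0"
  shows "is_eigenvalue_l2 \<rho> (complex_of_real t) \<longleftrightarrow> t = \<mu>\<^sub>1 \<or> t = \<mu>\<^sub>2"
proof -
  have "N\<^sup>2 * t\<^sup>2 - N\<^sup>2 * t + (1 - (cmod c)\<^sup>2)\<^sup>2 = N\<^sup>2 * (1 * t\<^sup>2 + (-1) * t + \<delta>)"
    unfolding \<delta>_def using N_pos by (simp add: field_simps power2_eq_square)
  then show ?thesis
    unfolding eigenvalue_rho_iff[OF assms] \<mu>\<^sub>1_def \<mu>\<^sub>2_def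
    using N_pos discrim_nonneg discriminant_iff[of 1 t "-1" \<delta>] by simp
qed

lemma nonzero_eigenvalues_rho:
  "{t. t \<noteq> 0 \<and> is_eigenvalue_l2 \<rho> (complex_of_real t)} = {\<mu>\<^sub>1, \<mu>\<^sub>2}"
  using eigenvalue_rho_iff_mu mu_pos by force

lemma Re_overlap_eq_0_if_mu_eq:
  assumes "\<mu>\<^sub>1 = \<mu>\<^sub>2"
  shows "Re c = 0"
proof -
  have "discrim 1 (-1) \<delta> = 0"
    using assms discrim_nonneg unfolding \<mu>\<^sub>1_def \<mu>\<^sub>2_def by simp
  then show ?thesis
    unfolding discrim_eq using Im_overlap_sq_less_1 N_pos by simp
qed

lemma mu_eq_half: "Re c = 0 \<Longrightarrow> \<mu>\<^sub>1 = 1 / 2"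
  unfolding \<mu>\<^sub>1_def discrim_eq by simp

(* eig_mult is a Sup in nat, hence 0 for an unbounded set: the bound card S <= 2 coming from
   span{p,q} is what makes it dominate every orthonormal set of eigenvectors. *)
lemma card_le_eig_mult_rho:
  assumes "\<mu> \<noteq> 0" and "finite S" and "orthonormal_l2 S" and "S \<subseteq> eigenspace_l2 \<rho> \<mu>"
  shows "card S \<le> eig_mult \<rho> \<mu>"
proof -
  have "card S' \<le> 2" if "finite S'" "orthonormal_l2 S'" "S' \<subseteq> eigenspace_l2 \<rho> \<mu>" for S'
  proof (rule card_orthonormal_l2_span2[OF l2_p l2_q that(1,2)])
    fix z
    assume "z \<in> S'"
    then have "is_l2 z" "\<rho> z = (\<lambda>i. \<mu> * z i)"
      using that(3) unfolding eigenspace_l2_def by auto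
    then show "\<exists>a a'. z = (\<lambda>i. a * p i + a' * q i)"
      by (rule eigenvector_in_span[OF assms(1)])
  qed
  then have "bdd_above {card S |S. finite S \<and> S \<subseteq> eigenspace_l2 \<rho> \<mu> \<and> orthonormal_l2 S}"
    by (intro bdd_aboveI[of _ 2]) auto
  then show ?thesis
    unfolding eig_mult_def using assms(2-4) by (intro cSup_upper) auto
qed

lemma one_le_eig_mult_rho:
  assumes "\<mu> \<noteq> 0" and "is_eigenvalue_l2 \<rho> \<mu>"
  shows "1 \<le> eig_mult \<rho> \<mu>"
proof -
  obtain y where y: "is_l2 y" "\<rho> y = (\<lambda>i. \<mu> * y i)" "y \<noteq> (\<lambda>_. 0)"
    using assms(2) unfolding is_eigenvalue_l2_def eigenspace_l2_def by blast
  define e where "e = l2_normalize y"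
  have "\<rho> e = (\<lambda>i. \<mu> * e i)"
    unfolding e_def l2_normalize_def rho_scale[OF y(1)] y(2) by (simp add: mult.left_commute)
  moreover have "is_l2 e"
    unfolding e_def by (rule is_l2_normalize[OF y(1)])
  ultimately have "e \<in> eigenspace_l2 \<rho> \<mu>"
    unfolding eigenspace_l2_def by simp
  moreover have "orthonormal_l2 {e}"
    unfolding orthonormal_l2_def e_def using l2_inner_normalize_self[OF y(1,3)] by simp
  ultimately show ?thesis
    using card_le_eig_mult_rho[OF assms(1), of "{e}"] by simp
qed

lemma rho_lincomb_half:
  assumes "Re c = 0"
  shows "\<rho> (\<lambda>k. a * p k + a' * q k) = (\<lambda>k. complex_of_real (1 / 2) * (a * p k + a' * q k))"
proof -
  have "cnj c = - c"
    using assms by (simp add: complex_eq_iff)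
  then have "complex_of_real N = 2 + 2 * c\<^sup>2"
    using N_eq by simp
  then show ?thesis
    unfolding rho_lincomb_eigen_iff using \<open>cnj c = - c\<close> by simp
qed

lemma two_le_eig_mult_rho_half:
  assumes "Re c = 0"
  shows "2 \<le> eig_mult \<rho> (complex_of_real (1 / 2))"
proof -
  define r where "r = complex_of_real (sqrt (1 - (cmod c)\<^sup>2))"
  have r_sq: "r * r = 1 - c * cnj c"
    unfolding r_def cmod_overlap_sq using cmod_overlap_sq_less_1
    by (simp flip: of_real_mult)
  have "r \<noteq> 0"
    unfolding r_def using cmod_overlap_sq_less_1 by simp
  \<comment> \<open>Gram-Schmidt partner of p in span{p,q}\<close>
  define e where "e = (\<lambda>k. (- c / r) * p k + (1 / r) * q k)"
  have l2_e: "is_l2 e"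
    unfolding e_def using l2_p l2_q by (rule is_l2_lincomb)
  have p_e: "l2_inner p e = 0"
    unfolding e_def inner_lincomb_pq by (simp add: field_simps)
  have "l2_inner e e = cnj (- c / r) * l2_inner p e + cnj (1 / r) * l2_inner q e"
    using l2_inner_lincomb_left[OF l2_e l2_p l2_q] unfolding e_def .
  also have "\<dots> = (1 - c * cnj c) / (r * r)"
    unfolding p_e unfolding e_def inner_lincomb_pq using \<open>r \<noteq> 0\<close>
    by (simp add: r_def field_simps)
  also have "\<dots> = 1"
    by (simp only: r_sq[symmetric]) (simp add: \<open>r \<noteq> 0\<close>)
  finally have e_e: "l2_inner e e = 1" .
  have "{p, e} \<subseteq> eigenspace_l2 \<rho> (complex_of_real (1 / 2))"
    using rho_lincomb_half[OF assms, of 1 0] rho_lincomb_half[OF assms, of "- c / r" "1 / r"]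
      l2_p l2_e unfolding eigenspace_l2_def e_def by simp
  moreover have "orthonormal_l2 {p, e}" and "p \<noteq> e"
    using p_e e_e unit_p l2_inner_commute[of e p]
    unfolding orthonormal_l2_def by auto
  ultimately show ?thesis
    using card_le_eig_mult_rho[of "complex_of_real (1 / 2)" "{p, e}"] by simp
qed

theorem ent_entropy_ge:
  "2 * \<delta> \<le> ent_entropy b"
proof -
  have "ent_entropy b = (\<Sum>\<^sub>\<infinity>t\<in>{\<mu>\<^sub>1, \<mu>\<^sub>2}. - (real (eig_mult \<rho> (complex_of_real t)) * (t * ln t)))"
    unfolding ent_entropy_def Let_def nonzero_eigenvalues_rho ..
  moreover have "2 * \<mu>\<^sub>1 * \<mu>\<^sub>2 \<le> \<dots>"
  proof (rule infsum_two_point_entropy_ge[OF mu_pos mu_sum])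
    show "1 \<le> eig_mult \<rho> (complex_of_real \<mu>\<^sub>1)" "1 \<le> eig_mult \<rho> (complex_of_real \<mu>\<^sub>2)"
      using one_le_eig_mult_rho eigenvalue_rho_iff_mu mu_pos by auto
    show "2 \<le> eig_mult \<rho> (complex_of_real \<mu>\<^sub>1)" if "\<mu>\<^sub>1 = \<mu>\<^sub>2"
      using two_le_eig_mult_rho_half[OF Re_overlap_eq_0_if_mu_eq[OF that]]
        mu_eq_half[OF Re_overlap_eq_0_if_mu_eq[OF that]]
      by (simp only:)
  qed
  ultimately show ?thesis
    using mu_prod by (simp add: mult.assoc)
qed


lemma rescaled_bound:
  assumes "0 < \<alpha>" and "0 < \<beta>"
  defines "u \<equiv> (\<lambda>i. complex_of_real \<alpha> * p i)" and "v \<equiv> (\<lambda>i. complex_of_real \<beta> * q i)"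
  shows "2 * (\<alpha>\<^sup>2 * \<beta>\<^sup>2 - (cmod (l2_inner u v))\<^sup>2)\<^sup>2
      / (Re (complex_of_real (2 * \<alpha>\<^sup>2 * \<beta>\<^sup>2) + (l2_inner u v)\<^sup>2 + (l2_inner v u)\<^sup>2))\<^sup>2
    = 2 * \<delta>"
proof -
  define M where "M = \<alpha>\<^sup>2 * \<beta>\<^sup>2"
  have "l2_inner u v = complex_of_real (\<alpha> * \<beta>) * c"
    and "l2_inner v u = complex_of_real (\<alpha> * \<beta>) * cnj c"
    unfolding u_def v_def by (simp_all add: l2_inner_scale_left l2_inner_scale_right inner_q_p)
  then have "\<alpha>\<^sup>2 * \<beta>\<^sup>2 - (cmod (l2_inner u v))\<^sup>2 = M * (1 - (cmod c)\<^sup>2)"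
    and "complex_of_real (2 * \<alpha>\<^sup>2 * \<beta>\<^sup>2) + (l2_inner u v)\<^sup>2 + (l2_inner v u)\<^sup>2
      = complex_of_real M * (2 + c\<^sup>2 + (cnj c)\<^sup>2)"
    unfolding M_def by (simp_all add: norm_mult power_mult_distrib algebra_simps)
  moreover have "Re (complex_of_real M * (2 + c\<^sup>2 + (cnj c)\<^sup>2)) = M * N"
    unfolding N_eq[symmetric] by simp
  moreover have "0 < M"
    unfolding M_def using assms(1,2) by simp
  ultimately show ?thesis
    by (simp add: \<delta>_def power_divide power_mult_distrib)
qed
end

theorem theorem3:
  fixes u v :: "'i::countable \<Rightarrow> complex"
    and w b :: "'i \<times> 'i \<Rightarrow> complex"
  assumes "is_l2 u" and "is_l2 v"
    and "u \<noteq> (\<lambda>_. 0)" and "v \<noteq> (\<lambda>_. 0)"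
    and "\<forall>c::complex. u \<noteq> (\<lambda>i. c * v i)"
    and w_def: "w = (\<lambda>p. complex_of_real (1 / (l2_norm u)\<^sup>2) * tensor u u p
                    + complex_of_real (1 / (l2_norm v)\<^sup>2) * tensor v v p)"
    and b_def: "b = (\<lambda>p. complex_of_real (1 / l2_norm w) * w p)"
  shows "ent_entropy b \<ge>
           2 * ((l2_norm u)\<^sup>2 * (l2_norm v)\<^sup>2 - (cmod (l2_inner u v))\<^sup>2)\<^sup>2
           / (Re (complex_of_real (2 * (l2_norm u)\<^sup>2 * (l2_norm v)\<^sup>2)
                   + (l2_inner u v)\<^sup>2 + (l2_inner v u)\<^sup>2))\<^sup>2"
proof -
  define p where "p = l2_normalize u"
  define q where "q = l2_normalize v"
  interpret pair: unit_pair p q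
    unfolding p_def q_def using assms(1-5) by (rule unit_pair_l2_normalize)
  have "pair.w = w"
    unfolding pair.w_def unfolding p_def q_def w_def using assms(1-4) by (simp add: tensor_l2_normalize)
  then have "b = pair.b"
    unfolding b_def pair.b_def l2_normalize_def by simp
  have u: "(\<lambda>i. complex_of_real (l2_norm u) * p i) = u"
    and v: "(\<lambda>i. complex_of_real (l2_norm v) * q i) = v"
    unfolding p_def q_def using assms(1-4) by (simp_all flip: scale_l2_normalize)
  have norms_pos: "0 < l2_norm u" "0 < l2_norm v"
    using assms(1-4) by (simp_all add: l2_norm_pos)
  show ?thesis
    using pair.ent_entropy_ge \<open>b = pair.b\<close> pair.rescaled_bound[OF norms_pos, unfolded u v] by simp
qed

end
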